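(* Let $n\ge2$, let $\mathbf{q}\in\mathbb{R}^n$ with $\sum_i\mathbf{q}_i=1$ and $\mathbf{q}\neq\mathbf{1}/n$, let $1/n<t<1$, and let $i$ be an index with $\mathbf{q}_i=\min_j\mathbf{q}_j$. Define $\bar{\mathbf{q}}=\frac{\mathbf{1}}{n}+\frac{1}{1-n\mathbf{q}_i}\big(\mathbf{q}-\frac{\mathbf{1}}{n}\big)$. If $\bar{\mathbf{q}}\cdot\bar{\mathbf{q}}<t$, then there exists a maximizer $\mathbf{p}^*$ of $\mathbf{p}\cdot\mathbf{q}$ over $P(t)$ with $\mathbf{p}^*_i=0$.
   Context: $\mathbf{1}\in\mathbb{R}^n$ is the all-ones vector. $P(t)=\{\mathbf{p}\in\mathbb{R}^n:\mathbf{p}\ge0,\ \sum_i\mathbf{p}_i=1,\ \mathbf{p}\cdot\mathbf{p}\le t\}$. *)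

theory Defs
  imports "HOL-Analysis.Analysis"
begin

definition ones :: "real ^ 'n" where
  "ones = (\<chi> j. 1)"

definition Pset :: "real \<Rightarrow> (real ^ 'n) set" where
  "Pset t = {p. (\<forall>j. 0 \<le> p $ j) \<and> (\<Sum>j\<in>UNIV. p $ j) = 1 \<and> p \<bullet> p \<le> t}"

end

theory Submission
  imports Defs
begin

text \<open>Write \<open>q = \<sigma> *\<^sub>R qbar q i + q$i *\<^sub>R ones\<close> with \<open>\<sigma> = 1 - n q$i > 0\<close>.  On the simplex,
  maximizing \<open>p \<bullet> q\<close> is then the same as maximizing \<open>p \<bullet> qbar q i\<close>, and \<open>qbar q i\<close> is itself
  a point of \<open>P(t)\<close> with vanishing \<open>i\<close>-th coordinate, strictly inside the ball.  If a maximizer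
  \<open>p\<close> had \<open>p$i > 0\<close>, moving mass from coordinate \<open>i\<close> towards \<open>qbar q i\<close>, corrected by a
  suitable multiple \<open>l\<close> of \<open>p - e\<^sub>i\<close>, would increase the objective while decreasing \<open>p \<bullet> p\<close> to
  first order; Cauchy-Schwarz and \<open>qbar \<bullet> qbar \<le> p \<bullet> qbar\<close> guarantee that such an \<open>l\<close> exists.\<close>

lemma Pset_compact: "compact (Pset t :: (real^'n) set)"
unfolding compact_eq_bounded_closed
proof
  have "norm p \<le> sqrt t" if "p \<in> Pset t" for p :: "real^'n"
    using that by (simp add: Pset_def norm_eq_sqrt_inner)
  then show "bounded (Pset t :: (real^'n) set)"
    by (metis bounded_cball bounded_subset mem_cball_0 subsetI)
  show "closed (Pset t :: (real^'n) set)"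
    unfolding Pset_def
    by (intro closed_Collect_conj closed_Collect_all closed_Collect_le closed_Collect_eq continuous_intros)
qed

lemma Pset_feasible_direction:
  fixes p v :: "real^'n"
  assumes p: "p \<in> Pset t" and v_sum: "(\<Sum>j\<in>UNIV. v $ j) = 0"
    and v_nonneg: "\<And>j. p $ j = 0 \<Longrightarrow> 0 \<le> v $ j" and descent: "p \<bullet> v < 0"
  shows "\<exists>e>0. p + e *\<^sub>R v \<in> Pset t"
proof -
  have p_nonneg: "\<And>j. 0 \<le> p $ j" and p_sum: "(\<Sum>j\<in>UNIV. p $ j) = 1" and p_t: "p \<bullet> p \<le> t"
    using p by (auto simp: Pset_def)
  have "\<forall>\<^sub>F e in at_right 0. 0 \<le> p $ j + e * v $ j" for j
  proof (cases "p $ j = 0")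
    case True
    have "\<forall>\<^sub>F e in at_right (0::real). 0 < e"
      by (rule eventually_at_right_less)
    then show ?thesis
      by (rule eventually_mono) (use True v_nonneg[of j] in simp)
  next
    case False
    then have "0 < p $ j" using p_nonneg[of j] by simp
    moreover have "((\<lambda>e. p $ j + e * v $ j) \<longlongrightarrow> p $ j) (at_right 0)"
      by (auto intro!: tendsto_eq_intros)
    ultimately have "\<forall>\<^sub>F e in at_right 0. 0 < p $ j + e * v $ j"
      by (simp add: order_tendstoD(1))
    then show ?thesis by (rule eventually_mono) simp
  qed
  then have nonneg: "\<forall>\<^sub>F e in at_right 0. \<forall>j. 0 \<le> p $ j + e * v $ j"
    by (rule eventually_all_finite)
  have "((\<lambda>e. 2 * (p \<bullet> v) + e * (v \<bullet> v)) \<longlongrightarrow> 2 * (p \<bullet> v)) (at_right 0)"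
    by (auto intro!: tendsto_eq_intros)
  then have shrinking: "\<forall>\<^sub>F e in at_right 0. 2 * (p \<bullet> v) + e * (v \<bullet> v) < 0"
    using descent by (simp add: order_tendstoD(2))
  obtain e :: real where e: "0 < e" "\<forall>j. 0 \<le> p $ j + e * v $ j"
    "2 * (p \<bullet> v) + e * (v \<bullet> v) < 0"
    using eventually_happens'[OF trivial_limit_at_right_real
        eventually_conj[OF eventually_at_right_less eventually_conj[OF nonneg shrinking]]]
    by blast
  have "(p + e *\<^sub>R v) \<bullet> (p + e *\<^sub>R v) = p \<bullet> p + e * (2 * (p \<bullet> v) + e * (v \<bullet> v))"
    by (simp add: inner_add_left inner_add_right inner_commute algebra_simps)
  moreover have "e * (2 * (p \<bullet> v) + e * (v \<bullet> v)) < 0"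
    using e(1,3) by (rule mult_pos_neg)
  ultimately have "(p + e *\<^sub>R v) \<bullet> (p + e *\<^sub>R v) \<le> t"
    using p_t by linarith
  moreover have "(\<Sum>j\<in>UNIV. (p + e *\<^sub>R v) $ j) = 1"
    by (simp add: sum.distrib p_sum v_sum flip: sum_distrib_left)
  ultimately show ?thesis
    using e by (auto simp: Pset_def)
qed

lemma mixing_parameter_exists:
  fixes a b s \<pi> :: real
  assumes "0 < \<pi>" "0 < b" "b \<le> a" "a\<^sup>2 \<le> s * b" "2 * a < s + b"
  shows "\<exists>l. l * a < b \<and> a - \<pi> < l * (s - \<pi>)"
proof -
  have "a\<^sup>2 - \<pi> * a < s * b - \<pi> * b"
  proof (cases "a = b")
    case True
    then have "a * a < s * a" using assms by simp
    then show ?thesis using True by (simp add: power2_eq_square)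
  next
    case False
    then have "\<pi> * b < \<pi> * a" using assms by simp
    then show ?thesis using assms(4) by linarith
  qed
  then have key: "a * (a - \<pi>) < b * (s - \<pi>)"
    by (simp add: power2_eq_square algebra_simps)
  show ?thesis
  proof (cases "a < \<pi>")
    case True
    then show ?thesis using assms by (intro exI[of _ 0]) simp
  next
    case False
    have "0 < a" using assms by simp
    with False have "0 \<le> a * (a - \<pi>)" by simp
    with key have "0 < b * (s - \<pi>)" by linarith
    with assms(2) have "0 < s - \<pi>" by (simp add: zero_less_mult_iff)
    with key \<open>0 < a\<close> have "(a - \<pi>) / (s - \<pi>) < b / a"
      by (simp add: field_simps)
    then obtain l where "(a - \<pi>) / (s - \<pi>) < l" "l < b / a"
      using dense by blast
    with \<open>0 < a\<close> \<open>0 < s - \<pi>\<close> have "l * a < b" "a - \<pi> < l * (s - \<pi>)"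
      by (simp_all add: field_simps)
    then show ?thesis by blast
  qed
qed

lemma Pset_maximizer_vanishes:
  fixes g p :: "real^'n"
  assumes g: "g \<in> Pset t" "g \<bullet> g < t" "g $ i = 0"
    and p: "p \<in> Pset t" and p_max: "\<And>x. x \<in> Pset t \<Longrightarrow> x \<bullet> g \<le> p \<bullet> g"
  shows "p $ i = 0"
proof (rule ccontr)
  assume "p $ i \<noteq> 0"
  with p have p_i: "0 < p $ i" by (simp add: Pset_def order_less_le)
  have g_nonneg: "\<And>j. 0 \<le> g $ j" and g_sum: "(\<Sum>j\<in>UNIV. g $ j) = 1"
    and p_sum: "(\<Sum>j\<in>UNIV. p $ j) = 1"
    using g p by (auto simp: Pset_def)
  define a where "a = p \<bullet> g"
  define b where "b = g \<bullet> g"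
  define s where "s = p \<bullet> p"
  have "b \<le> a" using p_max g(1) by (simp add: a_def b_def)
  moreover have "0 < b" using g_sum by (auto simp: b_def)
  moreover have "a\<^sup>2 \<le> s * b" unfolding a_def b_def s_def by (rule Cauchy_Schwarz_ineq)
  moreover have "2 * a < s + b"
  proof -
    have "(p - g) $ i \<noteq> 0" using p_i g(3) by simp
    then have "p - g \<noteq> 0" by auto
    then have "0 < (p - g) \<bullet> (p - g)" by simp
    also have "(p - g) \<bullet> (p - g) = s - 2 * a + b"
      by (simp add: a_def b_def s_def inner_diff_left inner_diff_right inner_commute)
    finally show ?thesis by simp
  qed
  ultimately obtain l where l: "l * a < b" "a - p $ i < l * (s - p $ i)"
    using mixing_parameter_exists p_i by blast
  define v where "v = (g - axis i 1) - l *\<^sub>R (p - axis i 1)"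
  have v_comp: "v $ j = g $ j - l * p $ j - (1 - l) * (if j = i then 1 else 0)" for j
    by (simp add: v_def axis_def algebra_simps)
  have "(\<Sum>j\<in>UNIV. v $ j) = 0"
    by (simp add: v_comp sum.distrib sum_subtractf g_sum p_sum flip: sum_distrib_left)
  moreover have "0 \<le> v $ j" if "p $ j = 0" for j
    using that p_i g_nonneg[of j] by (auto simp: v_comp)
  moreover have "p \<bullet> v < 0"
    using l(2) by (simp add: v_def inner_diff_right inner_axis a_def s_def algebra_simps)
  ultimately obtain e where "0 < e" and w: "p + e *\<^sub>R v \<in> Pset t"
    using Pset_feasible_direction[OF p] by blast
  have "v \<bullet> g = b - l * a"
    using g(3) by (simp add: v_def inner_diff_left inner_axis' a_def b_def)
  then have "(p + e *\<^sub>R v) \<bullet> g = a + e * (b - l * a)"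
    by (simp add: inner_add_left a_def)
  also have "\<dots> > a" using \<open>0 < e\<close> l(1) by simp
  finally show False using p_max[OF w] by (simp add: a_def)
qed

definition qbar :: "real^'n \<Rightarrow> 'n \<Rightarrow> real^'n" where
  "qbar q i = (1 / real CARD('n)) *\<^sub>R ones
     + (1 / (1 - real CARD('n) * q $ i)) *\<^sub>R (q - (1 / real CARD('n)) *\<^sub>R ones)"

lemma qbar_component:
  fixes q :: "real^'n"
  assumes "real CARD('n) * q $ i \<noteq> 1"
  shows "qbar q i $ j = (q $ j - q $ i) / (1 - real CARD('n) * q $ i)"
proof -
  define \<sigma> where "\<sigma> = 1 - real CARD('n) * q $ i"
  have "\<sigma> \<noteq> 0" using assms by (simp add: \<sigma>_def)
  have "qbar q i $ j = 1 / real CARD('n) + (q $ j - 1 / real CARD('n)) / \<sigma>"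
    by (simp add: qbar_def ones_def \<sigma>_def)
  also have "\<dots> = (\<sigma> / real CARD('n) + q $ j - 1 / real CARD('n)) / \<sigma>"
    using \<open>\<sigma> \<noteq> 0\<close> by (simp add: add_divide_distrib diff_divide_distrib)
  also have "\<sigma> / real CARD('n) = 1 / real CARD('n) - q $ i"
    by (simp add: \<sigma>_def diff_divide_distrib)
  finally show ?thesis
    by (simp add: \<sigma>_def)
qed

lemma min_component_lt_mean:
  fixes q :: "real^'n"
  assumes q_sum: "(\<Sum>j\<in>UNIV. q $ j) = 1" and q_ne: "q \<noteq> (1 / real CARD('n)) *\<^sub>R ones"
    and q_min: "\<And>j. q $ i \<le> q $ j"
  shows "real CARD('n) * q $ i < 1"
proof (rule ccontr)
  assume "\<not> real CARD('n) * q $ i < 1"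
  moreover have "real CARD('n) * q $ i \<le> real CARD('n) * q $ j" for j
    by (rule mult_left_mono[OF q_min]) simp
  ultimately have "1 \<le> real CARD('n) * q $ j" for j
    by (meson le_less_trans not_le)
  then have "0 \<le> q $ j - 1 / real CARD('n)" for j
    by (simp add: field_simps)
  moreover have "(\<Sum>j\<in>UNIV. q $ j - 1 / real CARD('n)) = 0"
    using q_sum by (simp add: sum_subtractf)
  ultimately have "\<forall>j. q $ j - 1 / real CARD('n) = 0"
    using sum_nonneg_eq_0_iff[of UNIV "\<lambda>j. q $ j - 1 / real CARD('n)"] by simp
  then show False
    using q_ne by (simp add: vec_eq_iff ones_def)
qed

lemma qbar_nonneg:
  fixes q :: "real^'n"
  assumes "\<And>j. q $ i \<le> q $ j" and "real CARD('n) * q $ i < 1"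
  shows "0 \<le> qbar q i $ j"
  using assms by (simp add: qbar_component)

lemma sum_qbar:
  fixes q :: "real^'n"
  assumes "(\<Sum>j\<in>UNIV. q $ j) = 1" and "real CARD('n) * q $ i \<noteq> 1"
  shows "(\<Sum>j\<in>UNIV. qbar q i $ j) = 1"
  using assms by (simp add: qbar_component sum_subtractf flip: sum_divide_distrib)

lemma inner_eq_inner_qbar:
  fixes x q :: "real^'n"
  assumes x_sum: "(\<Sum>j\<in>UNIV. x $ j) = 1" and "real CARD('n) * q $ i \<noteq> 1"
  shows "x \<bullet> q = (1 - real CARD('n) * q $ i) * (x \<bullet> qbar q i) + q $ i"
proof -
  let ?\<sigma> = "1 - real CARD('n) * q $ i"
  have "q = ?\<sigma> *\<^sub>R qbar q i + q $ i *\<^sub>R ones"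
    using assms(2) by (simp add: vec_eq_iff qbar_component ones_def)
  then have "x \<bullet> q = x \<bullet> (?\<sigma> *\<^sub>R qbar q i + q $ i *\<^sub>R ones)"
    by (rule arg_cong)
  also have "\<dots> = ?\<sigma> * (x \<bullet> qbar q i) + q $ i * (x \<bullet> ones)"
    by (simp add: inner_add_right)
  also have "x \<bullet> ones = 1"
    using x_sum by (simp add: inner_vec_def ones_def)
  finally show ?thesis
    by simp
qed

theorem mainTheorem10:
  fixes q :: "real ^ 'n" and t :: real and i :: 'n
  assumes n2: "CARD('n) \<ge> 2"
    and qsum: "(\<Sum>j\<in>UNIV. q $ j) = 1"
    and qne: "q \<noteq> (1 / real CARD('n)) *\<^sub>R ones"
    and t_lo: "1 / real CARD('n) < t" and t_hi: "t < 1"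
    and imin: "q $ i = (MIN j. q $ j)"
    and qbar: "(let qb = (1 / real CARD('n)) *\<^sub>R ones
                   + (1 / (1 - real CARD('n) * q $ i)) *\<^sub>R (q - (1 / real CARD('n)) *\<^sub>R ones)
               in qb \<bullet> qb) < t"
  shows "\<exists>pstar \<in> Pset t. (\<forall>p \<in> Pset t. p \<bullet> q \<le> pstar \<bullet> q) \<and> pstar $ i = 0"
proof -
  have q_min: "\<And>j. q $ i \<le> q $ j"
    using imin by simp
  then have \<sigma>_pos: "0 < 1 - real CARD('n) * q $ i"
    using min_component_lt_mean qsum qne by fastforce
  have qbar_P: "qbar q i \<in> Pset t" and qbar_lt: "qbar q i \<bullet> qbar q i < t"
    using qbar q_min \<sigma>_pos qsum qbar_nonneg[of q i] sum_qbar[of q i]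
    by (auto simp: Pset_def qbar_def [symmetric] Let_def)
  have qbar_i: "qbar q i $ i = 0"
    using \<sigma>_pos by (simp add: qbar_component)
  have "\<exists>p\<in>Pset t. \<forall>x\<in>Pset t. x \<bullet> q \<le> p \<bullet> q"
    by (rule continuous_attains_sup[OF Pset_compact]) (use qbar_P in \<open>auto intro!: continuous_intros\<close>)
  then obtain p where p: "p \<in> Pset t" and p_max: "\<forall>x\<in>Pset t. x \<bullet> q \<le> p \<bullet> q"
    by blast
  have "x \<bullet> qbar q i \<le> p \<bullet> qbar q i" if x: "x \<in> Pset t" for x
  proof -
    have "(\<Sum>j\<in>UNIV. x $ j) = 1" "(\<Sum>j\<in>UNIV. p $ j) = 1"
      using x p by (simp_all add: Pset_def)
    moreover have "x \<bullet> q \<le> p \<bullet> q"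
      using p_max x by blast
    ultimately show ?thesis
      using \<sigma>_pos inner_eq_inner_qbar[of x q i] inner_eq_inner_qbar[of p q i] by simp
  qed
  then have "p $ i = 0"
    by (rule Pset_maximizer_vanishes[OF qbar_P qbar_lt qbar_i p])
  with p p_max show ?thesis by blast
qed

end
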